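(* Consider two predator species $i=1,2$, each feeding on the same prey population according to the model described in the context, with quantities for predator $i$ carrying subscript $i$ ($\psi_i$, $\tilde A_{i,t}$, $\tilde X_{i,t}$, $Y_{i,t}$). Suppose Assumptions (A) and (B) hold (for each predator), that $\mathbb{E}(X_t)\propto t$ for all $t\ge0$, and that for all $t\ge0$, $\tilde A_{1,t}\le_{lr}\tilde A_{2,t}$ and \[ \mathbb{E}(\tilde{A}_{1,t})\, \psi_{1}(t) = \mathbb{E}(\tilde{A}_{2,t})\, \psi_{2}(t). \] Then $\psi_1(t)\ge\psi_2(t)$ and \[ \frac{\mathrm{var}(Y_{1,t})}{\mathbb{E}(Y_{1,t})} \leq \frac{\mathrm{var}(Y_{2,t})}{\mathbb{E}(Y_{2,t})} \] for all $t\ge0$.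
   Context: Model. The parasite burden of a prey aged $t\ge 0$ is $X_t$, where $(X_t)_{t\ge0}$ is a non-decreasing integer-valued stochastic process with $X_0=0$ (moments assumed finite, denominators positive). Prey ages have probability density $f_A$ on $[0,\infty)$. Predator $i$ encounters random prey at the times of a non-homogeneous Poisson process with intensity $\phi_i$; a predator $i$ aged $t$ consumes an encountered prey aged $u$ with probability $p_i(u,t)$. The consumption times form a Poisson process with intensity $\psi_i(t)=\phi_i(t)\int_0^\infty p_i(u,t)f_A(u)\,du$. The age $\tilde A_{i,t}$ of a prey consumed by predator $i$ aged $t$ has density $p_i(a,t)f_A(a)/\int_0^\infty p_i(u,t)f_A(u)\,du$, and $\tilde X_{i,t}=X_{\tilde A_{i,t}}$ (with $\tilde A_{i,t}$ independent of $X$). Consumed prey transfer all parasites, contributions being independent; the burden $Y_{i,t}$ of predator $i$ at age $t$ ($Y_{i,0}=0$) is the sum over consumption times $s\le t$ of independent copies of $\tilde X_{i,s}$, so $\mathbb{E}(Y_{i,t})=\int_0^t\mathbb{E}(\tilde X_{i,s})\psi_i(s)ds$, $\mathrm{var}(Y_{i,t})=\int_0^t\mathbb{E}(\tilde X_{i,s}^2)\psi_i(s)ds$. Likelihood ratio order: for random variables $U,V$ (both discrete or both continuous) with mass/density functions $p_U,p_V$, $U\le_{lr}V$ means $p_V(w)/p_U(w)$ is non-decreasing in $w$ over the union of the supports. Assumption (A): for all $0\le s\le t$, $X_s\le_{lr}X_t$. Assumption (B) (for predator $i$): for all $0\le s<t$, $p_i(u,t)/p_i(u,s)$ is non-decreasing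 in $u$. *)

theory Defs
  imports "HOL-Probability.Probability"
begin

(* Ratio  pV w / pU w  (computed in ennreal, so that c/0 = \<infinity> for c > 0)
   is non-decreasing in w over S intersected with the union of the supports. *)
definition ratio_nondec :: "'b::linorder set \<Rightarrow> ('b \<Rightarrow> real) \<Rightarrow> ('b \<Rightarrow> real) \<Rightarrow> bool" where
  "ratio_nondec S pU pV \<longleftrightarrow>
     (\<forall>w1\<in>S. \<forall>w2\<in>S. w1 \<le> w2 \<longrightarrow> (pU w1 \<noteq> 0 \<or> pV w1 \<noteq> 0) \<longrightarrow> (pU w2 \<noteq> 0 \<or> pV w2 \<noteq> 0) \<longrightarrow>
        ennreal (pV w1) / ennreal (pU w1) \<le> ennreal (pV w2) / ennreal (pU w2))"

definition lr_le :: "('b::linorder \<Rightarrow> real) \<Rightarrow> ('b \<Rightarrow> real) \<Rightarrow> bool" where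
  "lr_le pU pV \<longleftrightarrow> ratio_nondec UNIV pU pV"

definition pmf_X :: "'a measure \<Rightarrow> (real \<Rightarrow> 'a \<Rightarrow> int) \<Rightarrow> real \<Rightarrow> int \<Rightarrow> real" where
  "pmf_X M X t k = measure M {\<omega> \<in> space M. X t \<omega> = k}"

definition mom1 :: "'a measure \<Rightarrow> (real \<Rightarrow> 'a \<Rightarrow> int) \<Rightarrow> real \<Rightarrow> real" where
  "mom1 M X t = (\<integral>\<omega>. real_of_int (X t \<omega>) \<partial>M)"

definition mom2 :: "'a measure \<Rightarrow> (real \<Rightarrow> 'a \<Rightarrow> int) \<Rightarrow> real \<Rightarrow> real" where
  "mom2 M X t = (\<integral>\<omega>. (real_of_int (X t \<omega>))^2 \<partial>M)"

definition norm_const :: "(real \<Rightarrow> real) \<Rightarrow> (real \<Rightarrow> real \<Rightarrow> real) \<Rightarrow> real \<Rightarrow> real" where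
  "norm_const fA p t = (LINT u:{0..}|lborel. p u t * fA u)"

definition psi :: "(real \<Rightarrow> real) \<Rightarrow> (real \<Rightarrow> real \<Rightarrow> real) \<Rightarrow> (real \<Rightarrow> real) \<Rightarrow> real \<Rightarrow> real" where
  "psi fA p phi t = phi t * norm_const fA p t"

(* density of the age \<tilde>A_t of a prey consumed by a predator aged t (zero for negative ages) *)
definition age_dens :: "(real \<Rightarrow> real) \<Rightarrow> (real \<Rightarrow> real \<Rightarrow> real) \<Rightarrow> real \<Rightarrow> real \<Rightarrow> real" where
  "age_dens fA p t a = (if 0 \<le> a then p a t * fA a / norm_const fA p t else 0)"

definition mean_age :: "(real \<Rightarrow> real) \<Rightarrow> (real \<Rightarrow> real \<Rightarrow> real) \<Rightarrow> real \<Rightarrow> real" where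
  "mean_age fA p t = (LINT a:{0..}|lborel. a * age_dens fA p t a)"

(* E(\<tilde>X_t) and E(\<tilde>X_t^2), with \<tilde>X_t = X_{\<tilde>A_t}, \<tilde>A_t independent of X *)
definition mean_Xt :: "'a measure \<Rightarrow> (real \<Rightarrow> 'a \<Rightarrow> int) \<Rightarrow> (real \<Rightarrow> real) \<Rightarrow> (real \<Rightarrow> real \<Rightarrow> real) \<Rightarrow> real \<Rightarrow> real" where
  "mean_Xt M X fA p t = (LINT a:{0..}|lborel. mom1 M X a * age_dens fA p t a)"

definition sq_Xt :: "'a measure \<Rightarrow> (real \<Rightarrow> 'a \<Rightarrow> int) \<Rightarrow> (real \<Rightarrow> real) \<Rightarrow> (real \<Rightarrow> real \<Rightarrow> real) \<Rightarrow> real \<Rightarrow> real" where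
  "sq_Xt M X fA p t = (LINT a:{0..}|lborel. mom2 M X a * age_dens fA p t a)"

definition mean_Y :: "'a measure \<Rightarrow> (real \<Rightarrow> 'a \<Rightarrow> int) \<Rightarrow> (real \<Rightarrow> real) \<Rightarrow> (real \<Rightarrow> real \<Rightarrow> real) \<Rightarrow> (real \<Rightarrow> real) \<Rightarrow> real \<Rightarrow> real" where
  "mean_Y M X fA p phi t = (LINT s:{0..t}|lborel. mean_Xt M X fA p s * psi fA p phi s)"

definition var_Y :: "'a measure \<Rightarrow> (real \<Rightarrow> 'a \<Rightarrow> int) \<Rightarrow> (real \<Rightarrow> real) \<Rightarrow> (real \<Rightarrow> real \<Rightarrow> real) \<Rightarrow> (real \<Rightarrow> real) \<Rightarrow> real \<Rightarrow> real" where
  "var_Y M X fA p phi t = (LINT s:{0..t}|lborel. sq_Xt M X fA p s * psi fA p phi s)"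

definition predator_ok :: "'a measure \<Rightarrow> (real \<Rightarrow> 'a \<Rightarrow> int) \<Rightarrow> (real \<Rightarrow> real) \<Rightarrow> (real \<Rightarrow> real \<Rightarrow> real) \<Rightarrow> (real \<Rightarrow> real) \<Rightarrow> bool" where
  "predator_ok M X fA p phi \<longleftrightarrow>
     (\<forall>u t. 0 \<le> u \<longrightarrow> 0 \<le> t \<longrightarrow> 0 \<le> p u t \<and> p u t \<le> 1) \<and>
     (\<forall>t\<ge>0. 0 \<le> phi t) \<and>
     (\<forall>t\<ge>0. set_integrable lborel {0..} (\<lambda>u. p u t * fA u)) \<and>
     (\<forall>t\<ge>0. 0 < norm_const fA p t) \<and>
     (\<forall>t\<ge>0. set_integrable lborel {0..} (\<lambda>a. a * age_dens fA p t a)) \<and>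
     (\<forall>t\<ge>0. set_integrable lborel {0..} (\<lambda>a. mom1 M X a * age_dens fA p t a)) \<and>
     (\<forall>t\<ge>0. set_integrable lborel {0..} (\<lambda>a. mom2 M X a * age_dens fA p t a)) \<and>
     (\<forall>t\<ge>0. set_integrable lborel {0..t} (\<lambda>s. mean_Xt M X fA p s * psi fA p phi s)) \<and>
     (\<forall>t\<ge>0. set_integrable lborel {0..t} (\<lambda>s. sq_Xt M X fA p s * psi fA p phi s)) \<and>
     (\<forall>t>0. 0 < mean_Y M X fA p phi t)"

definition assumption_B :: "(real \<Rightarrow> real \<Rightarrow> real) \<Rightarrow> bool" where
  "assumption_B p \<longleftrightarrow> (\<forall>s t. 0 \<le> s \<longrightarrow> s < t \<longrightarrow> ratio_nondec {0..} (\<lambda>u. p u s) (\<lambda>u. p u t))"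

end

theory Submission
  imports Defs
begin

(*
  Write Ai, Xi for the age and burden of a prey consumed by predator i aged s.
  A likelihood ratio order U <=lr V makes the pair of densities TP2, and for a TP2 pair
  Chebyshev's integral inequality compares the averages of every nondecreasing weight.
  With the weight a this gives E(A1) <= E(A2), hence psi1 >= psi2 by the balance
  E(A1) psi1 = E(A2) psi2. Since E(X_a) = c a, the integrands E(Xi) psi_i = c E(Ai) psi_i of
  E(Y1) and E(Y2) coincide. Assumption (A), through the same inequality for the pmfs of X,
  makes E(X_a^2) / a nondecreasing in a; applied to the size-biased age densities a f_i(a) this
  yields E(X1^2) psi1 <= E(X2^2) psi2, and integrating over [0, t] compares the variances.
*)

text \<open>TP2 (totally positive of order 2) is the likelihood ratio order with the ratio
  \<open>g / f\<close> cross-multiplied, so that no division by zero occurs.\<close>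

definition tp2 :: "('b::linorder \<Rightarrow> real) \<Rightarrow> ('b \<Rightarrow> real) \<Rightarrow> bool" where
  "tp2 f g \<longleftrightarrow> (\<forall>a b. a \<le> b \<longrightarrow> f b * g a \<le> f a * g b)"

lemma tp2_if_lr_le:
  fixes f g :: "'b::linorder \<Rightarrow> real"
  assumes "lr_le f g" and f: "\<And>x. 0 \<le> f x" and g: "\<And>x. 0 \<le> g x"
  shows "tp2 f g"
  unfolding tp2_def
proof (intro allI impI)
  fix a b :: 'b
  assume "a \<le> b"
  show "f b * g a \<le> f a * g b"
  proof (cases "f b = 0 \<or> g a = 0")
    case True
    then show ?thesis using f g by auto
  next
    case False
    then have fb: "0 < f b" and ga: "0 < g a" using f g by (auto simp: less_le)
    have ratio: "ennreal (g a) / ennreal (f a) \<le> ennreal (g b) / ennreal (f b)"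
      using assms(1) \<open>a \<le> b\<close> fb ga unfolding lr_le_def ratio_nondec_def by auto
    have "f a \<noteq> 0"
    proof
      assume "f a = 0"
      then have "ennreal (g a) / ennreal (f a) = \<infinity>"
        using ga by (simp add: divide_ennreal_def)
      moreover have "ennreal (g b) / ennreal (f b) \<noteq> \<infinity>"
        using fb by (simp add: ennreal_divide_eq_top_iff)
      ultimately show False using ratio by (simp add: top_unique)
    qed
    then have fa: "0 < f a" using f by (simp add: less_le)
    have "g a / f a \<le> g b / f b"
      using ratio fa fb g[of a] g[of b] by (simp add: divide_ennreal ennreal_le_iff)
    then show ?thesis using fa fb by (simp add: field_simps)
  qed
qed

lemma tp2_mult_weight:
  fixes f g w :: "'b::linorder \<Rightarrow> real"
  assumes "tp2 f g" and "\<And>x. 0 \<le> w x \<or> (f x = 0 \<and> g x = 0)"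
  shows "tp2 (\<lambda>x. w x * f x) (\<lambda>x. w x * g x)"
  unfolding tp2_def
proof (intro allI impI)
  fix a b :: 'b
  assume "a \<le> b"
  show "w b * f b * (w a * g a) \<le> w a * f a * (w b * g b)"
  proof (cases "(f a = 0 \<and> g a = 0) \<or> (f b = 0 \<and> g b = 0)")
    case True
    then show ?thesis by auto
  next
    case False
    then have "0 \<le> w a * w b" using assms(2) by (meson mult_nonneg_nonneg)
    then have "w a * w b * (f b * g a) \<le> w a * w b * (f a * g b)"
      using assms(1) \<open>a \<le> b\<close> unfolding tp2_def by (simp add: mult_left_mono)
    then show ?thesis by (simp add: algebra_simps)
  qed
qed

lemma
  fixes f g :: "'b \<Rightarrow> real"
  assumes "sigma_finite_measure N" "integrable N f" "integrable N g"
  shows integrable_pair_mult: "integrable (N \<Otimes>\<^sub>M N) (\<lambda>(x, y). f x * g y)"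
    and integral_pair_mult: "(\<integral>(x, y). f x * g y \<partial>(N \<Otimes>\<^sub>M N)) = integral\<^sup>L N f * integral\<^sup>L N g"
proof -
  interpret pair_sigma_finite N N
    using assms(1) by (simp add: pair_sigma_finite_def)
  have [measurable]: "f \<in> borel_measurable N" "g \<in> borel_measurable N"
    using assms by auto
  show int: "integrable (N \<Otimes>\<^sub>M N) (\<lambda>(x, y). f x * g y)"
  proof (rule Fubini_integrable)
    have "(\<lambda>x. \<integral>y. norm (f x * g y) \<partial>N) = (\<lambda>x. \<bar>f x\<bar> * (\<integral>y. \<bar>g y\<bar> \<partial>N))"
      by (simp add: abs_mult)
    then show "integrable N (\<lambda>x. \<integral>y. norm (case (x, y) of (x, y) \<Rightarrow> f x * g y) \<partial>N)"
      using assms by simp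
  qed (use assms in auto)
  show "(\<integral>(x, y). f x * g y \<partial>(N \<Otimes>\<^sub>M N)) = integral\<^sup>L N f * integral\<^sup>L N g"
    using integral_fst[of "\<lambda>x y. f x * g y"] int by simp
qed

text \<open>Chebyshev's integral inequality for a TP2 pair: the double integral of
  \<open>(h b - h a) (g\<^sub>1 a g\<^sub>2 b - g\<^sub>1 b g\<^sub>2 a)\<close> is nonnegative.\<close>

lemma tp2_integral_mono:
  fixes g1 g2 h :: "'b::linorder \<Rightarrow> real"
  assumes "sigma_finite_measure N" "tp2 g1 g2" "mono h"
    and "integrable N g1" "integrable N g2"
    and "integrable N (\<lambda>x. h x * g1 x)" "integrable N (\<lambda>x. h x * g2 x)"
  shows "(\<integral>x. h x * g1 x \<partial>N) * integral\<^sup>L N g2 \<le> (\<integral>x. h x * g2 x \<partial>N) * integral\<^sup>L N g1"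
proof -
  interpret pair_sigma_finite N N
    using assms(1) by (simp add: pair_sigma_finite_def)
  define P where "P = (\<lambda>(a, b). g1 a * (h b * g2 b) - h a * g1 a * g2 b)"
  have P_eq: "P = (\<lambda>z. (case z of (a, b) \<Rightarrow> g1 a * (h b * g2 b)) - (case z of (a, b) \<Rightarrow> h a * g1 a * g2 b))"
    by (auto simp: P_def fun_eq_iff)
  have int1: "integrable (N \<Otimes>\<^sub>M N) (\<lambda>(a, b). g1 a * (h b * g2 b))"
    using integrable_pair_mult[OF assms(1,4,7)] .
  have int2: "integrable (N \<Otimes>\<^sub>M N) (\<lambda>(a, b). h a * g1 a * g2 b)"
    using integrable_pair_mult[OF assms(1,6,5)] .
  have P_int: "integrable (N \<Otimes>\<^sub>M N) P"
    unfolding P_eq using int1 int2 by (rule Bochner_Integration.integrable_diff)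
  have "integral\<^sup>L (N \<Otimes>\<^sub>M N) P
      = integral\<^sup>L N g1 * (\<integral>x. h x * g2 x \<partial>N) - (\<integral>x. h x * g1 x \<partial>N) * integral\<^sup>L N g2"
    unfolding P_eq Bochner_Integration.integral_diff[OF int1 int2]
      integral_pair_mult[OF assms(1,4,7)] integral_pair_mult[OF assms(1,6,5)] ..
  moreover have "0 \<le> integral\<^sup>L (N \<Otimes>\<^sub>M N) P"
  proof -
    have "P (a, b) + P (b, a) = (h b - h a) * (g1 a * g2 b - g1 b * g2 a)" for a b
      by (simp add: P_def algebra_simps)
    moreover have "0 \<le> (h b - h a) * (g1 a * g2 b - g1 b * g2 a)" for a b
      using assms(2,3) unfolding tp2_def mono_def
      by (cases "a \<le> b") (auto intro!: mult_nonneg_nonneg mult_nonpos_nonpos simp: mult.commute)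
    ultimately have "0 \<le> (\<integral>z. P z + P (snd z, fst z) \<partial>(N \<Otimes>\<^sub>M N))"
      by (intro Bochner_Integration.integral_nonneg) (auto simp: split_beta)
    also have "\<dots> = 2 * integral\<^sup>L (N \<Otimes>\<^sub>M N) P"
      using P_int integrable_product_swap[OF P_int] integral_product_swap[of P]
      by (simp add: split_beta')
    finally show ?thesis by simp
  qed
  ultimately show ?thesis by (simp add: mult.commute)
qed

lemma distr_eq_density_pmf_X:
  assumes "prob_space M" "X t \<in> measurable M (count_space UNIV)"
  shows "distr M (count_space UNIV) (X t) = density (count_space UNIV) (\<lambda>k. ennreal (pmf_X M X t k))"
proof (rule measure_eqI_countable[where A = UNIV])
  fix k :: int
  interpret prob_space M by fact
  have "emeasure (distr M (count_space UNIV) (X t)) {k} = emeasure M {\<omega> \<in> space M. X t \<omega> = k}"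
    using assms(2) by (simp add: emeasure_distr vimage_def Int_def conj_commute)
  also have "\<dots> = emeasure (density (count_space UNIV) (\<lambda>k. ennreal (pmf_X M X t k))) {k}"
    by (simp add: pmf_X_def emeasure_eq_measure emeasure_density nn_integral_count_space_indicator)
  finally show "emeasure (distr M (count_space UNIV) (X t)) {k}
      = emeasure (density (count_space UNIV) (\<lambda>k. ennreal (pmf_X M X t k))) {k}" .
qed auto

lemma pmf_X_nonneg: "0 \<le> pmf_X M X t k"
  by (simp add: pmf_X_def)

lemma
  fixes f :: "int \<Rightarrow> real"
  assumes "prob_space M" "X t \<in> measurable M (count_space UNIV)"
  shows integrable_pmf_X_iff:
      "integrable M (\<lambda>\<omega>. f (X t \<omega>)) \<longleftrightarrow> integrable (count_space UNIV) (\<lambda>k. f k * pmf_X M X t k)"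
    and integral_pmf_X:
      "(\<integral>\<omega>. f (X t \<omega>) \<partial>M) = (\<integral>k. f k * pmf_X M X t k \<partial>count_space UNIV)"
  using assms(2)
  by (simp_all add: integrable_distr_eq[symmetric] integral_distr[symmetric]
      distr_eq_density_pmf_X[of M X t, OF assms] integrable_density integral_density pmf_X_nonneg mult.commute)

lemma pmf_X_eq_0_if_neg:
  assumes "\<forall>\<omega>\<in>space M. 0 \<le> X t \<omega>" "k < 0"
  shows "pmf_X M X t k = 0"
proof -
  have "{\<omega> \<in> space M. X t \<omega> = k} = {}"
    using assms by force
  then show ?thesis
    unfolding pmf_X_def by (metis measure_empty)
qed

locale parasite_burden = prob_space M for M :: "'a measure" +
  fixes X :: "real \<Rightarrow> 'a \<Rightarrow> int"
  assumes X_measurable: "0 \<le> t \<Longrightarrow> X t \<in> measurable M (count_space UNIV)"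
    and X_0: "\<omega> \<in> space M \<Longrightarrow> X 0 \<omega> = 0"
    and X_mono: "\<omega> \<in> space M \<Longrightarrow> 0 \<le> s \<Longrightarrow> s \<le> t \<Longrightarrow> X s \<omega> \<le> X t \<omega>"
    and integrable_X: "0 \<le> t \<Longrightarrow> integrable M (\<lambda>\<omega>. real_of_int (X t \<omega>))"
    and integrable_X_sq: "0 \<le> t \<Longrightarrow> integrable M (\<lambda>\<omega>. (real_of_int (X t \<omega>))\<^sup>2)"
    and lr_le_pmf_X: "0 \<le> s \<Longrightarrow> s \<le> t \<Longrightarrow> lr_le (pmf_X M X s) (pmf_X M X t)"
begin

lemma X_nonneg: "\<omega> \<in> space M \<Longrightarrow> 0 \<le> t \<Longrightarrow> 0 \<le> X t \<omega>"
  using X_mono[of \<omega> 0 t] X_0 by simp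

lemma mom1_nonneg: "0 \<le> t \<Longrightarrow> 0 \<le> mom1 M X t"
  unfolding mom1_def by (rule integral_nonneg_AE) (simp add: X_nonneg)

lemma mom2_0: "mom2 M X 0 = 0"
  unfolding mom2_def by (simp add: X_0 cong: Bochner_Integration.integral_cong)

lemma mom2_nonneg: "0 \<le> mom2 M X t"
  unfolding mom2_def by simp

text \<open>Chebyshev's inequality for the size-biased pmfs \<open>k P(X\<^sub>t = k)\<close> with the weight \<open>k\<close>.\<close>

lemma mom2_mom1_cross_le:
  assumes "0 \<le> s" "s \<le> t"
  shows "mom2 M X s * mom1 M X t \<le> mom2 M X t * mom1 M X s"
proof -
  let ?N = "count_space (UNIV :: int set)"
  define g where "g u = (\<lambda>k. real_of_int k * pmf_X M X u k)" for u
  have moments: "integrable ?N (g u) \<and> integrable ?N (\<lambda>k. real_of_int k * g u k)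
      \<and> mom1 M X u = integral\<^sup>L ?N (g u) \<and> mom2 M X u = (\<integral>k. real_of_int k * g u k \<partial>?N)"
    if "0 \<le> u" for u
  proof -
    note X_u = prob_space_axioms X_measurable[OF that]
    show ?thesis
      using integrable_pmf_X_iff[where X=X and t=u, OF X_u, of real_of_int]
        integrable_pmf_X_iff[where X=X and t=u, OF X_u, of "\<lambda>k. (real_of_int k)\<^sup>2"]
        integral_pmf_X[where X=X and t=u, OF X_u, of real_of_int]
        integral_pmf_X[where X=X and t=u, OF X_u, of "\<lambda>k. (real_of_int k)\<^sup>2"]
        integrable_X[OF that] integrable_X_sq[OF that]
      by (simp add: g_def mom1_def mom2_def power2_eq_square mult.assoc)
  qed
  have "tp2 (pmf_X M X s) (pmf_X M X t)"
    using lr_le_pmf_X[OF assms] by (rule tp2_if_lr_le) (simp_all add: pmf_X_nonneg)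
  then have "tp2 (g s) (g t)"
    unfolding g_def using assms X_nonneg
    by (intro tp2_mult_weight) (auto simp: not_le intro!: pmf_X_eq_0_if_neg)
  then have "(\<integral>k. real_of_int k * g s k \<partial>?N) * integral\<^sup>L ?N (g t)
      \<le> (\<integral>k. real_of_int k * g t k \<partial>?N) * integral\<^sup>L ?N (g s)"
    using moments assms by (intro tp2_integral_mono sigma_finite_measure_count_space) (auto simp: mono_def)
  then show ?thesis
    using moments assms by simp
qed

lemma mom2_div_mono:
  assumes "\<forall>t\<ge>0. mom1 M X t = c * t" "0 < c" "0 < s" "s \<le> t"
  shows "mom2 M X s / s \<le> mom2 M X t / t"
proof -
  have "c * (mom2 M X s * t) \<le> c * (mom2 M X t * s)"
    using mom2_mom1_cross_le[of s t] assms by (simp add: algebra_simps)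
  then show ?thesis
    using assms by (simp add: field_simps)
qed

end

lemma
  fixes F :: "real \<Rightarrow> real"
  assumes "\<And>a. a < 0 \<Longrightarrow> F a = 0"
  shows set_integrable_atLeast_0_iff: "set_integrable lborel {0..} F \<longleftrightarrow> integrable lborel F"
    and set_integral_atLeast_0: "(LINT a:{0..}|lborel. F a) = integral\<^sup>L lborel F"
proof -
  have "(\<lambda>a. indicator {0..} a *\<^sub>R F a) = F"
    using assms by (force simp: fun_eq_iff indicator_def)
  then show "set_integrable lborel {0..} F \<longleftrightarrow> integrable lborel F"
    and "(LINT a:{0..}|lborel. F a) = integral\<^sup>L lborel F"
    by (simp_all add: set_integrable_def set_lebesgue_integral_def)
qed

lemma age_dens_neg: "a < 0 \<Longrightarrow> age_dens fA p t a = 0"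
  by (simp add: age_dens_def)

lemma mean_age_eq_integral: "mean_age fA p t = (\<integral>a. a * age_dens fA p t a \<partial>lborel)"
  unfolding mean_age_def by (rule set_integral_atLeast_0) (simp add: age_dens_neg)

lemma sq_Xt_eq_integral: "sq_Xt M X fA p t = (\<integral>a. mom2 M X a * age_dens fA p t a \<partial>lborel)"
  unfolding sq_Xt_def by (rule set_integral_atLeast_0) (simp add: age_dens_neg)

lemma mean_Xt_eq_if_linear:
  assumes "\<forall>t\<ge>0. mom1 M X t = c * t"
  shows "mean_Xt M X fA p t = c * mean_age fA p t"
proof -
  have "mean_Xt M X fA p t = (LINT a:{0..}|lborel. c * (a * age_dens fA p t a))"
    unfolding mean_Xt_def using assms by (intro set_lebesgue_integral_cong) auto
  then show ?thesis
    by (simp add: mean_age_def)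
qed

lemma mean_Y_eq_if_linear:
  assumes "\<forall>t\<ge>0. mom1 M X t = c * t"
  shows "mean_Y M X fA p phi t = c * (LINT s:{0..t}|lborel. mean_age fA p s * psi fA p phi s)"
  unfolding mean_Y_def mean_Xt_eq_if_linear[OF assms] by (simp add: mult.assoc)

locale predator =
  fixes M :: "'a measure" and X :: "real \<Rightarrow> 'a \<Rightarrow> int" and fA :: "real \<Rightarrow> real"
    and p :: "real \<Rightarrow> real \<Rightarrow> real" and phi :: "real \<Rightarrow> real"
  assumes fA_nonneg: "0 \<le> a \<Longrightarrow> 0 \<le> fA a"
    and p_nonneg: "0 \<le> u \<Longrightarrow> 0 \<le> t \<Longrightarrow> 0 \<le> p u t"
    and phi_nonneg: "0 \<le> t \<Longrightarrow> 0 \<le> phi t"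
    and set_integrable_p_fA: "0 \<le> t \<Longrightarrow> set_integrable lborel {0..} (\<lambda>u. p u t * fA u)"
    and norm_const_pos: "0 \<le> t \<Longrightarrow> 0 < norm_const fA p t"
    and set_integrable_mean_age: "0 \<le> t \<Longrightarrow> set_integrable lborel {0..} (\<lambda>a. a * age_dens fA p t a)"
    and set_integrable_sq_Xt:
      "0 \<le> t \<Longrightarrow> set_integrable lborel {0..} (\<lambda>a. mom2 M X a * age_dens fA p t a)"
    and set_integrable_var_Y:
      "0 \<le> t \<Longrightarrow> set_integrable lborel {0..t} (\<lambda>s. sq_Xt M X fA p s * psi fA p phi s)"
    and mean_Y_pos: "0 < t \<Longrightarrow> 0 < mean_Y M X fA p phi t"
begin

lemma psi_nonneg: "0 \<le> t \<Longrightarrow> 0 \<le> psi fA p phi t"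
  unfolding psi_def using phi_nonneg norm_const_pos by (meson less_imp_le mult_nonneg_nonneg)

lemma age_dens_nonneg: "0 \<le> t \<Longrightarrow> 0 \<le> age_dens fA p t a"
  unfolding age_dens_def using p_nonneg fA_nonneg norm_const_pos
  by (simp add: divide_nonneg_pos)

lemma
  assumes "0 \<le> t"
  shows integrable_age_dens: "integrable lborel (age_dens fA p t)"
    and integral_age_dens: "integral\<^sup>L lborel (age_dens fA p t) = 1"
proof -
  have "set_integrable lborel {0..} (\<lambda>u. p u t * fA u / norm_const fA p t)"
    using set_integrable_p_fA[OF assms] by simp
  also have "?this \<longleftrightarrow> set_integrable lborel {0..} (age_dens fA p t)"
    by (rule set_integrable_cong) (auto simp: age_dens_def)
  finally show "integrable lborel (age_dens fA p t)"
    using set_integrable_atLeast_0_iff[of "age_dens fA p t"] by (simp add: age_dens_neg)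
  have "integral\<^sup>L lborel (age_dens fA p t) = (LINT a:{0..}|lborel. age_dens fA p t a)"
    using set_integral_atLeast_0[of "age_dens fA p t"] by (simp add: age_dens_neg)
  also have "\<dots> = (LINT u:{0..}|lborel. p u t * fA u / norm_const fA p t)"
    by (rule set_lebesgue_integral_cong) (auto simp: age_dens_def)
  also have "\<dots> = 1"
    using norm_const_pos[OF assms] by (simp add: norm_const_def[symmetric])
  finally show "integral\<^sup>L lborel (age_dens fA p t) = 1" .
qed

lemma integrable_mean_age: "0 \<le> t \<Longrightarrow> integrable lborel (\<lambda>a. a * age_dens fA p t a)"
  using set_integrable_mean_age set_integrable_atLeast_0_iff[of "\<lambda>a. a * age_dens fA p t a"]
  by (simp add: age_dens_neg)

lemma integrable_sq_Xt: "0 \<le> t \<Longrightarrow> integrable lborel (\<lambda>a. mom2 M X a * age_dens fA p t a)"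
  using set_integrable_sq_Xt set_integrable_atLeast_0_iff[of "\<lambda>a. mom2 M X a * age_dens fA p t a"]
  by (simp add: age_dens_neg)

lemma mean_age_pos:
  assumes "0 \<le> t"
  shows "0 < mean_age fA p t"
proof -
  have nonneg: "0 \<le> a * age_dens fA p t a" for a
    using age_dens_nonneg[OF assms, of a] by (cases "a < 0") (simp_all add: age_dens_neg)
  have "mean_age fA p t \<noteq> 0"
  proof
    assume "mean_age fA p t = 0"
    then have "AE a in lborel. a * age_dens fA p t a = 0"
      using integral_nonneg_eq_0_iff_AE[OF integrable_mean_age[OF assms]] nonneg
      by (simp add: mean_age_eq_integral)
    then have "AE a in lborel. age_dens fA p t a = 0"
      using AE_lborel_singleton[of 0] by eventually_elim auto
    then have "integral\<^sup>L lborel (age_dens fA p t) = 0"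
      by (rule integral_eq_zero_AE)
    then show False
      using integral_age_dens[OF assms] by simp
  qed
  moreover have "0 \<le> mean_age fA p t"
    unfolding mean_age_eq_integral using nonneg by simp
  ultimately show ?thesis by simp
qed

lemma set_integral_mean_age_psi_nonneg: "0 \<le> (LINT s:{0..t}|lborel. mean_age fA p s * psi fA p phi s)"
proof -
  have "0 \<le> indicator {0..t} s * (mean_age fA p s * psi fA p phi s)" for s
    using mean_age_pos[of s] psi_nonneg[of s]
    by (cases "0 \<le> s") (simp_all add: indicator_def)
  then show ?thesis
    unfolding set_lebesgue_integral_def by simp
qed

end

lemma predator_if_predator_ok:
  assumes "predator_ok M X fA p phi" "\<forall>a\<ge>0. 0 \<le> fA a"
  shows "predator M X fA p phi"
  using assms unfolding predator_ok_def by unfold_locales simp_all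

lemma mean_age_le_if_lr_le:
  assumes "predator M X fA p1 phi1" "predator M X fA p2 phi2" "0 \<le> t"
    and "lr_le (age_dens fA p1 t) (age_dens fA p2 t)"
  shows "mean_age fA p1 t \<le> mean_age fA p2 t"
proof -
  interpret P1: predator M X fA p1 phi1 by fact
  interpret P2: predator M X fA p2 phi2 by fact
  have "tp2 (age_dens fA p1 t) (age_dens fA p2 t)"
    using assms(3) by (intro tp2_if_lr_le[OF assms(4)] P1.age_dens_nonneg P2.age_dens_nonneg)
  then have "(\<integral>a. a * age_dens fA p1 t a \<partial>lborel) * integral\<^sup>L lborel (age_dens fA p2 t)
      \<le> (\<integral>a. a * age_dens fA p2 t a \<partial>lborel) * integral\<^sup>L lborel (age_dens fA p1 t)"
    using assms(3)
    by (intro tp2_integral_mono[where h = "\<lambda>a. a"] sigma_finite_lborel P1.integrable_age_dens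
        P2.integrable_age_dens P1.integrable_mean_age P2.integrable_mean_age) (simp_all add: mono_def)
  then show ?thesis
    using assms(3) by (simp add: mean_age_eq_integral P1.integral_age_dens P2.integral_age_dens)
qed

lemma sq_Xt_mean_age_le_if_lr_le:
  assumes "predator M X fA p1 phi1" "predator M X fA p2 phi2" "0 \<le> t"
    and "lr_le (age_dens fA p1 t) (age_dens fA p2 t)"
    and "mom2 M X 0 = 0" "\<And>a. 0 \<le> mom2 M X a"
    and "\<And>a b. 0 < a \<Longrightarrow> a \<le> b \<Longrightarrow> mom2 M X a / a \<le> mom2 M X b / b"
  shows "sq_Xt M X fA p1 t * mean_age fA p2 t \<le> sq_Xt M X fA p2 t * mean_age fA p1 t"
proof -
  interpret P1: predator M X fA p1 phi1 by fact
  interpret P2: predator M X fA p2 phi2 by fact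
  \<comment> \<open>\<open>E(X\<^sub>a\<^sup>2) f(a) = h(a) \<cdot> a f(a)\<close>, and the size-biased densities \<open>a f\<^sub>i(a)\<close> are still TP2.\<close>
  define h where "h a = (if a \<le> 0 then 0 else mom2 M X a / a)" for a
  have "mono h"
    unfolding mono_def h_def using assms(6,7) by (auto simp: not_le)
  have factor: "mom2 M X a * age_dens fA q t a = h a * (a * age_dens fA q t a)" for a q
    using assms(5) by (cases "a < 0") (auto simp: h_def age_dens_neg)
  have "tp2 (age_dens fA p1 t) (age_dens fA p2 t)"
    using assms(3) by (intro tp2_if_lr_le[OF assms(4)] P1.age_dens_nonneg P2.age_dens_nonneg)
  then have "tp2 (\<lambda>a. a * age_dens fA p1 t a) (\<lambda>a. a * age_dens fA p2 t a)"
    by (rule tp2_mult_weight) (auto simp: not_le age_dens_neg)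
  then have "(\<integral>a. h a * (a * age_dens fA p1 t a) \<partial>lborel) * (\<integral>a. a * age_dens fA p2 t a \<partial>lborel)
      \<le> (\<integral>a. h a * (a * age_dens fA p2 t a) \<partial>lborel) * (\<integral>a. a * age_dens fA p1 t a \<partial>lborel)"
    using assms(3) P1.integrable_sq_Xt[OF assms(3)] P2.integrable_sq_Xt[OF assms(3)]
    by (intro tp2_integral_mono \<open>mono h\<close> sigma_finite_lborel P1.integrable_mean_age
        P2.integrable_mean_age) (simp_all add: factor[symmetric])
  then show ?thesis
    by (simp add: factor[symmetric] sq_Xt_eq_integral mean_age_eq_integral)
qed

lemma le_of_equal_products:
  fixes m1 m2 q1 q2 v1 v2 :: real
  assumes "0 < m1" "m1 \<le> m2" "m1 * q1 = m2 * q2" "0 \<le> q2" "v1 * m2 \<le> v2 * m1"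
  shows "q2 \<le> q1" and "v1 * q1 \<le> v2 * q2"
proof -
  have "m1 * q2 \<le> m1 * q1"
    using assms(2-4) by (simp add: mult_right_mono)
  then show "q2 \<le> q1"
    using assms(1) by simp
  have "m1 * (v1 * q1) = (v1 * m2) * q2"
    using assms(3) by (simp add: algebra_simps)
  also have "\<dots> \<le> (v2 * m1) * q2"
    using assms(4,5) by (rule mult_right_mono[rotated])
  finally show "v1 * q1 \<le> v2 * q2"
    using assms(1) by (simp add: algebra_simps)
qed

theorem theorem3:
  fixes M :: "'a measure" and X :: "real \<Rightarrow> 'a \<Rightarrow> int"
    and fA :: "real \<Rightarrow> real"
    and p1 p2 :: "real \<Rightarrow> real \<Rightarrow> real" and phi1 phi2 :: "real \<Rightarrow> real"
  assumes "prob_space M"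
    and "\<forall>t\<ge>0. X t \<in> measurable M (count_space UNIV)"
    and "\<forall>\<omega>\<in>space M. X 0 \<omega> = 0"
    and "\<forall>\<omega>\<in>space M. \<forall>s t. 0 \<le> s \<longrightarrow> s \<le> t \<longrightarrow> X s \<omega> \<le> X t \<omega>"
    and "\<forall>t\<ge>0. integrable M (\<lambda>\<omega>. real_of_int (X t \<omega>))"
    and "\<forall>t\<ge>0. integrable M (\<lambda>\<omega>. (real_of_int (X t \<omega>))^2)"
    and "fA \<in> borel_measurable lborel"
    and "\<forall>a\<ge>0. 0 \<le> fA a"
    and "set_integrable lborel {0..} fA"
    and "(LINT a:{0..}|lborel. fA a) = 1"
    and "predator_ok M X fA p1 phi1"
    and "predator_ok M X fA p2 phi2"
    and A: "\<forall>s t. 0 \<le> s \<longrightarrow> s \<le> t \<longrightarrow> lr_le (pmf_X M X s) (pmf_X M X t)"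
    and "assumption_B p1"
    and "assumption_B p2"
    and "\<exists>c. \<forall>t\<ge>0. mom1 M X t = c * t"
    and "\<forall>t\<ge>0. lr_le (age_dens fA p1 t) (age_dens fA p2 t)"
    and "\<forall>t\<ge>0. mean_age fA p1 t * psi fA p1 phi1 t = mean_age fA p2 t * psi fA p2 phi2 t"
  shows "\<forall>t\<ge>0. psi fA p1 phi1 t \<ge> psi fA p2 phi2 t \<and>
           var_Y M X fA p1 phi1 t / mean_Y M X fA p1 phi1 t
             \<le> var_Y M X fA p2 phi2 t / mean_Y M X fA p2 phi2 t"
proof -
  interpret parasite_burden M X
    by (intro parasite_burden.intro parasite_burden_axioms.intro assms(1))
      (simp_all add: assms(2,3,5,6) A assms(4)[rule_format])
  have P1: "predator M X fA p1 phi1" and P2: "predator M X fA p2 phi2"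
    using assms(8,11,12) by (simp_all add: predator_if_predator_ok)
  interpret P1: predator M X fA p1 phi1 by (fact P1)
  interpret P2: predator M X fA p2 phi2 by (fact P2)
  obtain c where c: "\<forall>t\<ge>0. mom1 M X t = c * t"
    using assms(16) by blast
  have "c \<noteq> 0"
    using P1.mean_Y_pos[of 1] by (auto simp: mean_Y_eq_if_linear[OF c])
  moreover have "0 \<le> c"
    using mom1_nonneg[of 1] c by simp
  ultimately have "0 < c" by simp
  have pointwise: "psi fA p2 phi2 s \<le> psi fA p1 phi1 s \<and>
      sq_Xt M X fA p1 s * psi fA p1 phi1 s \<le> sq_Xt M X fA p2 s * psi fA p2 phi2 s" if "0 \<le> s" for s
  proof -
    have lr: "lr_le (age_dens fA p1 s) (age_dens fA p2 s)"
      using assms(17) that by blast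
    have balance: "mean_age fA p1 s * psi fA p1 phi1 s = mean_age fA p2 s * psi fA p2 phi2 s"
      using assms(18) that by blast
    show ?thesis
      using le_of_equal_products[OF P1.mean_age_pos[OF that] mean_age_le_if_lr_le[OF P1 P2 that lr]
          balance P2.psi_nonneg[OF that]
          sq_Xt_mean_age_le_if_lr_le[OF P1 P2 that lr mom2_0 mom2_nonneg mom2_div_mono[OF c \<open>0 < c\<close>]]]
      by blast
  qed
  show ?thesis
  proof (intro allI impI conjI)
    fix t :: real
    assume "0 \<le> t"
    then show "psi fA p2 phi2 t \<le> psi fA p1 phi1 t"
      using pointwise by blast
    have "mean_Y M X fA p1 phi1 t = mean_Y M X fA p2 phi2 t"
      unfolding mean_Y_eq_if_linear[OF c] using assms(18)
      by (intro arg_cong[where f = "(*) c"] set_lebesgue_integral_cong) auto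
    moreover have "0 \<le> mean_Y M X fA p2 phi2 t"
      unfolding mean_Y_eq_if_linear[OF c]
      using \<open>0 < c\<close> P2.set_integral_mean_age_psi_nonneg by simp
    moreover have "var_Y M X fA p1 phi1 t \<le> var_Y M X fA p2 phi2 t"
      unfolding var_Y_def using \<open>0 \<le> t\<close> pointwise
      by (intro set_integral_mono P1.set_integrable_var_Y P2.set_integrable_var_Y) auto
    ultimately show "var_Y M X fA p1 phi1 t / mean_Y M X fA p1 phi1 t
        \<le> var_Y M X fA p2 phi2 t / mean_Y M X fA p2 phi2 t"
      by (simp add: divide_right_mono)
  qed
qed

end
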